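(* Let $z=z[x;t]$ be defined by the differential equation $$\frac{dz}{dt}=L(t,x(t),{^C_aD^\alpha_t}x(t),z(t)),\quad t\in[a,b],\qquad z(a)=z_a,$$ where $x=(x_1,\ldots,x_n)$, ${^C_aD^\alpha_t}x=({^C_aD^{\alpha_1}_t}x_1,\ldots,{^C_aD^{\alpha_n}_t}x_n)$, $\alpha_j\in(0,1)$, $x\in C^1([a,b],\mathbb R^n)$ with ${^C_aD^\alpha_t}x\in C^1([a,b],\mathbb R^n)$, $L:[a,b]\times\mathbb R^{2n+1}\to\mathbb R$ is of class $C^1$, and, writing $[x,z](t):=(t,x(t),{^C_aD^\alpha_t}x(t),z(t))$ and $\lambda(t):=\exp\left(-\int_a^t \frac{\partial L}{\partial z}[x,z](\tau)d\tau\right)$, the functions ${_tD^{\alpha_j}_b}\left(\lambda(t)\frac{\partial L}{\partial {^C_aD^{\alpha_j}_t}x_j}[x,z](t)\right)$ exist and are continuous on $[a,b]$. Consider a one-parameter family of transformations $\bar{x}_j=h_j(t,x,s)$, $j=1,\ldots,n$, $s\in(-\varepsilon,\varepsilon)$, with $h_j$ of class $C^2$ and $h_j(t,x,0)=x_j$, so that $h_j(t,x,s)=x_j+s\xi_j(t,x)+o(s)$ with $\xi_j(t,x)=\frac{\partial}{\partial s}h_j(t,x,s)|_{s=0}$. Let $\theta(t)=\frac{d}{ds}\bar z[x+s\xi;t]\big|_{s=0}$, where $\bar z$ solves the same differential equation with the same initial value $z(a)=z_a$ and $x$ replaced by $\bar x$. Suppose the functional $z$ is invariant under this family, i.e. $\theta(t)\equiv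 0$. Then $$\sum_{j=1}^n\mathcal{D}^{\alpha_j}\left[\lambda(t)\frac{\partial L}{\partial {^C_aD^{\alpha_j}_t}x_j}[x,z](t),\xi_j(t,x)\right]=0,$$ where $\mathcal{D}^{\alpha}[f,g]:=f\cdot {^C_aD^{\alpha}_t}g- g\cdot{_tD^{\alpha}_b}f$, holds along the solutions of the generalized fractional Euler--Lagrange equations $$\lambda(t)\frac{\partial L}{\partial x_j}[x,z](t)+{_tD^{\alpha_j}_b}\left(\lambda(t)\frac{\partial L}{\partial {^C_aD^{\alpha_j}_t}x_j}[x,z](t)\right)=0,\quad j=1,\ldots,n.$$
   Context: ${^C_aD^\alpha_t}$ denotes the left Caputo fractional derivative and ${_tD^\alpha_b}$ the right Riemann--Liouville fractional derivative of order $\alpha\in(0,1)$: ${^C_aD^\alpha_t}x(t)=\frac{1}{\Gamma(1-\alpha)}\int_a^t(t-\tau)^{-\alpha}x'(\tau)d\tau$ and ${_tD^\alpha_b}x(t)=\frac{-1}{\Gamma(1-\alpha)}\frac{d}{dt}\int_t^b(\tau-t)^{-\alpha}x(\tau)d\tau$. *)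

theory Defs
  imports "HOL-Analysis.Analysis"
begin

definition C1_on :: "'a::real_normed_vector set \<Rightarrow> ('a \<Rightarrow> 'b::real_normed_vector) \<Rightarrow> bool" where
  "C1_on S f \<longleftrightarrow> (\<exists>f'. (\<forall>p\<in>S. (f has_derivative blinfun_apply (f' p)) (at p within S))
                        \<and> continuous_on S f')"

definition C2_on :: "'a::real_normed_vector set \<Rightarrow> ('a \<Rightarrow> 'b::real_normed_vector) \<Rightarrow> bool" where
  "C2_on S f \<longleftrightarrow> (\<exists>f'. (\<forall>p\<in>S. (f has_derivative blinfun_apply (f' p)) (at p within S))
                        \<and> C1_on S f')"

definition caputo_left :: "real \<Rightarrow> real \<Rightarrow> real \<Rightarrow> (real \<Rightarrow> real) \<Rightarrow> real \<Rightarrow> real" where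
  "caputo_left \<alpha> a b x t =
     1 / Gamma (1 - \<alpha>) * integral {a..t} (\<lambda>\<tau>. (t - \<tau>) powr (- \<alpha>) * vector_derivative x (at \<tau> within {a..b}))"

definition RL_right_integral :: "real \<Rightarrow> real \<Rightarrow> (real \<Rightarrow> real) \<Rightarrow> real \<Rightarrow> real" where
  "RL_right_integral \<alpha> b f s = integral {s..b} (\<lambda>\<tau>. (\<tau> - s) powr (- \<alpha>) * f \<tau>)"

definition RL_right :: "real \<Rightarrow> real \<Rightarrow> real \<Rightarrow> (real \<Rightarrow> real) \<Rightarrow> real \<Rightarrow> real" where
  "RL_right \<alpha> a b f t =
     - (1 / Gamma (1 - \<alpha>)) * vector_derivative (RL_right_integral \<alpha> b f) (at t within {a..b})"

definition RL_right_exists :: "real \<Rightarrow> real \<Rightarrow> real \<Rightarrow> (real \<Rightarrow> real) \<Rightarrow> real \<Rightarrow> bool" where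
  "RL_right_exists \<alpha> a b f t \<longleftrightarrow> RL_right_integral \<alpha> b f differentiable (at t within {a..b})"

definition caputo_vec :: "('n \<Rightarrow> real) \<Rightarrow> real \<Rightarrow> real \<Rightarrow> (real \<Rightarrow> (real^'n)) \<Rightarrow> real \<Rightarrow> (real^'n)" where
  "caputo_vec \<alpha> a b x t = (\<chi> j. caputo_left (\<alpha> j) a b (\<lambda>\<tau>. x \<tau> $ j) t)"

definition frac_D :: "real \<Rightarrow> real \<Rightarrow> real \<Rightarrow> (real \<Rightarrow> real) \<Rightarrow> (real \<Rightarrow> real) \<Rightarrow> real \<Rightarrow> real" where
  "frac_D \<alpha> a b f g t = f t * caputo_left \<alpha> a b g t - g t * RL_right \<alpha> a b f t"

end

theory Submission
  imports Defs
begin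

text \<open>
  Write \<open>p = [x,z]\<close>, let \<open>\<eta> = (0, \<xi>, \<^sup>C\<^sub>aD\<^sup>\<alpha>\<xi>, 0)\<close> be the direction in which the family moves
  the arguments of \<open>L\<close>, and \<open>F = L'(p) \<eta>\<close> the first variation; since the Caputo derivative is
  linear on \<open>C\<^sup>1\<close> curves, \<open>x + s\<xi>\<close> has Caputo derivative \<open>\<^sup>C\<^sub>aD\<^sup>\<alpha>x + s \<^sup>C\<^sub>aD\<^sup>\<alpha>\<xi>\<close>.
  The difference quotients \<open>\<theta>\<^sub>s = (z\<^sub>s - z) / s\<close> of the solutions satisfy
  \<open>\<theta>\<^sub>s' = (L(p + s (\<eta> + \<theta>\<^sub>s e\<^sub>z)) - L(p)) / s\<close>, with \<open>e\<^sub>z\<close> the \<open>z\<close>-direction, and invariance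
  says \<open>\<theta>\<^sub>s(t) \<rightarrow> 0\<close> for every \<open>t\<close>. If \<open>F(t\<^sub>0) > 0\<close>, then on a short interval around \<open>t\<^sub>0\<close>
  and for small \<open>s\<close>, \<open>\<theta>\<^sub>s\<close> increases at rate at least \<open>F(t\<^sub>0)/4\<close> whenever it is small, so it
  cannot be small at both ends of the interval; reversing \<open>s\<close> excludes \<open>F(t\<^sub>0) < 0\<close>. Thus
  \<open>F = 0\<close>, without differentiating \<open>z\<^sub>s\<close> in \<open>s\<close>. Finally, the Euler--Lagrange equations
  replace each right Riemann--Liouville term in the operators \<open>\<D>\<^sup>\<alpha>\<close> by \<open>-\<lambda> \<partial>L/\<partial>x\<^sub>j\<close>, which
  turns the sum in the conclusion into \<open>\<lambda> F = 0\<close>.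
\<close>

section \<open>Continuously differentiable curves\<close>

lemma C1_on_imp_continuous_on: "C1_on S f \<Longrightarrow> continuous_on S f"
  unfolding C1_on_def continuous_on_eq_continuous_within
  using has_derivative_continuous by blast

lemma C1_on_real_iff:
  fixes f :: "real \<Rightarrow> 'b::real_normed_vector"
  shows "C1_on S f \<longleftrightarrow>
    (\<exists>f'. (\<forall>t\<in>S. (f has_vector_derivative f' t) (at t within S)) \<and> continuous_on S f')"
proof
  assume "C1_on S f"
  then obtain F where F: "\<forall>t\<in>S. (f has_derivative blinfun_apply (F t)) (at t within S)"
      and F_cont: "continuous_on S F"
    unfolding C1_on_def by blast
  have "blinfun_apply (F t) = (\<lambda>u. u *\<^sub>R F t 1)" for t
    by (metis blinfun.scaleR_right mult.right_neutral real_scaleR_def)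
  then have "\<forall>t\<in>S. (f has_vector_derivative F t 1) (at t within S)"
    using F unfolding has_vector_derivative_def by metis
  moreover have "continuous_on S (\<lambda>t. F t 1)"
    using F_cont by (intro continuous_intros)
  ultimately show "\<exists>f'. (\<forall>t\<in>S. (f has_vector_derivative f' t) (at t within S)) \<and> continuous_on S f'"
    by (intro exI[of _ "\<lambda>t. F t 1"] conjI)
next
  assume "\<exists>f'. (\<forall>t\<in>S. (f has_vector_derivative f' t) (at t within S)) \<and> continuous_on S f'"
  then obtain f' where "\<forall>t\<in>S. (f has_vector_derivative f' t) (at t within S)" "continuous_on S f'"
    by blast
  then show "C1_on S f"
    unfolding C1_on_def has_vector_derivative_def
    by (intro exI[of _ "\<lambda>t. blinfun_scaleR_left (f' t)"]) (auto intro: continuous_intros)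
qed

lemma C1_on_vec_nth:
  fixes x :: "real \<Rightarrow> 'a::real_normed_vector^'n"
  assumes "C1_on S x"
  shows "C1_on S (\<lambda>t. x t $ j)"
proof -
  obtain x' where "\<forall>t\<in>S. (x has_vector_derivative x' t) (at t within S)" "continuous_on S x'"
    using assms unfolding C1_on_real_iff by blast
  then show ?thesis
    unfolding C1_on_real_iff
    by (intro exI[of _ "\<lambda>t. x' t $ j"] conjI ballI continuous_intros
          bounded_linear.has_vector_derivative[OF bounded_linear_vec_nth]) auto
qed

section \<open>Fractional integrals and Caputo derivatives\<close>

definition RL_left_integral :: "real \<Rightarrow> real \<Rightarrow> (real \<Rightarrow> real) \<Rightarrow> real \<Rightarrow> real" where
  "RL_left_integral \<alpha> a f t = integral {a..t} (\<lambda>\<tau>. (t - \<tau>) powr (- \<alpha>) * f \<tau>)"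

lemma powr_mult_continuous_integrable:
  fixes \<psi> :: "real \<Rightarrow> real"
  assumes "\<alpha> < 1" "c \<ge> 0" "continuous_on {0..c} \<psi>"
  shows "(\<lambda>v. v powr (- \<alpha>) * \<psi> v) integrable_on {0..c}"
proof -
  have "(\<lambda>v. v powr (- \<alpha>)) absolutely_integrable_on {0..c}"
    using has_integral_powr_from_0[of "- \<alpha>" c] assms
    by (intro nonnegative_absolutely_integrable_1) (auto simp: integrable_on_def)
  moreover have "\<psi> \<in> borel_measurable (lebesgue_on {0..c})"
    using assms by (intro continuous_imp_measurable_on_sets_lebesgue) auto
  moreover have "bounded (\<psi> ` {0..c})"
    using assms by (intro compact_imp_bounded compact_continuous_image) auto
  ultimately have "(\<lambda>v. \<psi> v * v powr (- \<alpha>)) absolutely_integrable_on {0..c}"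
    by (intro absolutely_integrable_bounded_measurable_product_real) auto
  then show ?thesis
    by (simp add: absolutely_integrable_on_def mult.commute)
qed

lemma segment_point_in_interval:
  fixes a t v :: real
  assumes "t \<in> {a..b}" "v \<in> {0..1}"
  shows "t - (t - a) * v \<in> {a..b}"
proof -
  have "0 \<le> (t - a) * v" "(t - a) * v \<le> t - a"
    using assms mult_left_le[of v "t - a"] by auto
  then show ?thesis using assms by auto
qed

text \<open>The substitution \<open>\<tau> = t - (t - a) v\<close> moves the singularity of the kernel to the fixed
  endpoint \<open>v = 0\<close> of a fixed interval.\<close>

lemma has_integral_RL_left_kernel_rescaled:
  fixes \<phi> :: "real \<Rightarrow> real"
  assumes "\<alpha> < 1" "a < t" "continuous_on {a..t} \<phi>"
  shows "((\<lambda>\<tau>. (t - \<tau>) powr (- \<alpha>) * \<phi> \<tau>) has_integral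
           (t - a) powr (1 - \<alpha>) * integral {0..1} (\<lambda>v. v powr (- \<alpha>) * \<phi> (t - (t - a) * v))) {a..t}"
proof -
  define J where "J = integral {0..1} (\<lambda>v. v powr (- \<alpha>) * \<phi> (t - (t - a) * v))"
  have "continuous_on {0..1} (\<lambda>v. \<phi> (t - (t - a) * v))"
    using assms segment_point_in_interval[of t a t]
    by (intro continuous_on_compose2[OF assms(3)] continuous_intros) auto
  then have J: "((\<lambda>v. v powr (- \<alpha>) * \<phi> (t - (t - a) * v)) has_integral J) {0..1}"
    unfolding J_def using assms(1) by (intro integrable_integral powr_mult_continuous_integrable) auto
  have "((\<lambda>v. (- v) powr (- \<alpha>) * \<phi> (t + (t - a) * v)) has_integral J) (cbox (-1) 0)"
    using has_integral_reflect_lemma_real[OF J] by (simp add: cbox_interval)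
  from has_integral_affinity'[OF this, of "1 / (t - a)" "- t / (t - a)"] assms(2)
  have "((\<lambda>\<tau>. (- ((1 / (t - a)) * \<tau> + - t / (t - a))) powr (- \<alpha>)
        * \<phi> (t + (t - a) * ((1 / (t - a)) * \<tau> + - t / (t - a))))
      has_integral J / (1 / (t - a))) (cbox ((-1 - - t / (t - a)) / (1 / (t - a))) ((0 - - t / (t - a)) / (1 / (t - a))))"
    by (simp add: mult.commute)
  moreover have "t + (t - a) * ((1 / (t - a)) * \<tau> + - t / (t - a)) = \<tau>"
      "- ((1 / (t - a)) * \<tau> + - t / (t - a)) = (t - \<tau>) / (t - a)" for \<tau>
    using assms(2) by (simp_all add: divide_simps)
  moreover have "(-1 - - t / (t - a)) / (1 / (t - a)) = a" "(0 - - t / (t - a)) / (1 / (t - a)) = t"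
      "J / (1 / (t - a)) = (t - a) * J"
    using assms(2) by (simp_all add: divide_simps)
  ultimately have "((\<lambda>\<tau>. ((t - \<tau>) / (t - a)) powr (- \<alpha>) * \<phi> \<tau>) has_integral (t - a) * J) {a..t}"
    by (simp add: cbox_interval mult.commute)
  then have "((\<lambda>\<tau>. (t - a) powr (- \<alpha>) * (((t - \<tau>) / (t - a)) powr (- \<alpha>) * \<phi> \<tau>))
      has_integral (t - a) powr (- \<alpha>) * ((t - a) * J)) {a..t}"
    by (rule has_integral_mult_right)
  moreover have "(t - a) powr (- \<alpha>) * ((t - a) * J) = (t - a) powr (1 - \<alpha>) * J"
    using assms(2) by (simp add: powr_diff powr_minus field_simps)
  moreover have "(t - a) powr (- \<alpha>) * (((t - \<tau>) / (t - a)) powr (- \<alpha>) * \<phi> \<tau>) = (t - \<tau>) powr (- \<alpha>) * \<phi> \<tau>"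
    if "\<tau> \<in> {a..t}" for \<tau>
    using assms(2) that by (simp add: powr_divide powr_minus field_simps)
  ultimately show ?thesis
    unfolding J_def[symmetric] by (metis (no_types, lifting) has_integral_eq)
qed

lemma continuous_on_rescaled_RL_integral:
  fixes \<phi> :: "real \<Rightarrow> real"
  assumes "\<alpha> < 1" and \<phi>: "continuous_on {a..b} \<phi>"
  shows "continuous_on {a..b} (\<lambda>t. integral {0..1} (\<lambda>v. v powr (- \<alpha>) * \<phi> (t - (t - a) * v)))"
proof -
  obtain B where B: "\<And>y. y \<in> {a..b} \<Longrightarrow> \<bar>\<phi> y\<bar> \<le> B"
    using compact_imp_bounded[OF compact_continuous_image[OF \<phi> compact_Icc]]
    unfolding bounded_iff by (metis imageI real_norm_def)
  have integrable: "(\<lambda>v. v powr (- \<alpha>) * \<phi> (t - (t - a) * v)) integrable_on {0..1}"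
    if "t \<in> {a..b}" for t
    using assms that segment_point_in_interval[OF that]
    by (intro powr_mult_continuous_integrable continuous_on_compose2[OF \<phi>] continuous_intros) auto
  show ?thesis
    unfolding continuous_on_eq_continuous_within continuous_within_sequentially comp_def
  proof (intro ballI allI impI)
    fix t and s :: "nat \<Rightarrow> real"
    assume t: "t \<in> {a..b}" and s: "(\<forall>n. s n \<in> {a..b}) \<and> s \<longlonglongrightarrow> t"
    show "(\<lambda>n. integral {0..1} (\<lambda>v. v powr (- \<alpha>) * \<phi> (s n - (s n - a) * v)))
        \<longlonglongrightarrow> integral {0..1} (\<lambda>v. v powr (- \<alpha>) * \<phi> (t - (t - a) * v))"
    proof (rule dominated_convergence(2))
      show "(\<lambda>v. v powr (- \<alpha>) * \<phi> (s n - (s n - a) * v)) integrable_on {0..1}" for n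
        using integrable s by blast
      show "(\<lambda>v. v powr (- \<alpha>) * B) integrable_on {0..1}"
        using assms(1) by (intro powr_mult_continuous_integrable continuous_intros) auto
      show "norm (v powr (- \<alpha>) * \<phi> (s n - (s n - a) * v)) \<le> v powr (- \<alpha>) * B"
        if "v \<in> {0..1}" for n v
        using B[OF segment_point_in_interval] s that by (simp add: abs_mult mult_left_mono)
      show "(\<lambda>n. v powr (- \<alpha>) * \<phi> (s n - (s n - a) * v)) \<longlonglongrightarrow> v powr (- \<alpha>) * \<phi> (t - (t - a) * v)"
        if "v \<in> {0..1}" for v
        using s t that segment_point_in_interval[of _ a b v]
        by (intro tendsto_mult_left continuous_on_tendsto_compose[OF \<phi>] tendsto_intros
            always_eventually) (auto simp del: atLeastAtMost_iff)
    qed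
  qed
qed

lemma continuous_on_RL_left_integral:
  fixes \<phi> :: "real \<Rightarrow> real"
  assumes "\<alpha> < 1" "continuous_on {a..b} \<phi>"
  shows "continuous_on {a..b} (RL_left_integral \<alpha> a \<phi>)"
proof -
  have "continuous_on {a..b}
      (\<lambda>t. (t - a) powr (1 - \<alpha>) * integral {0..1} (\<lambda>v. v powr (- \<alpha>) * \<phi> (t - (t - a) * v)))"
    using assms
    by (intro continuous_on_mult continuous_on_rescaled_RL_integral continuous_on_powr'
        continuous_on_diff continuous_on_id continuous_on_const) auto
  then show ?thesis
  proof (rule continuous_on_eq)
    fix t assume t: "t \<in> {a..b}"
    show "(t - a) powr (1 - \<alpha>) * integral {0..1} (\<lambda>v. v powr (- \<alpha>) * \<phi> (t - (t - a) * v))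
        = RL_left_integral \<alpha> a \<phi> t"
    proof (cases "t = a")
      case False
      then have "a < t" "continuous_on {a..t} \<phi>"
        using t assms(2) by (auto intro: continuous_on_subset)
      then show ?thesis
        unfolding RL_left_integral_def
        by (rule integral_unique[symmetric, OF has_integral_RL_left_kernel_rescaled[OF assms(1)]])
    qed (simp add: RL_left_integral_def)
  qed
qed

lemma caputo_left_eq_RL_left_integral:
  assumes "a < b" "t \<in> {a..b}"
    and "\<And>t. t \<in> {a..b} \<Longrightarrow> (g has_vector_derivative g' t) (at t within {a..b})"
  shows "caputo_left \<alpha> a b g t = 1 / Gamma (1 - \<alpha>) * RL_left_integral \<alpha> a g' t"
proof -
  have "vector_derivative g (at \<tau> within {a..b}) = g' \<tau>" if "\<tau> \<in> {a..t}" for \<tau>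
    using assms that by (intro vector_derivative_within_closed_interval) auto
  then have "integral {a..t} (\<lambda>\<tau>. (t - \<tau>) powr (- \<alpha>) * vector_derivative g (at \<tau> within {a..b}))
      = RL_left_integral \<alpha> a g' t"
    unfolding RL_left_integral_def by (intro integral_cong) simp
  then show ?thesis
    unfolding caputo_left_def by simp
qed

lemma continuous_on_caputo_left:
  assumes "a < b" "\<alpha> < 1" "C1_on {a..b} g"
  shows "continuous_on {a..b} (caputo_left \<alpha> a b g)"
proof -
  obtain g' where g': "\<And>t. t \<in> {a..b} \<Longrightarrow> (g has_vector_derivative g' t) (at t within {a..b})"
      and "continuous_on {a..b} g'"
    using assms(3) unfolding C1_on_real_iff by blast
  then have "continuous_on {a..b} (\<lambda>t. 1 / Gamma (1 - \<alpha>) * RL_left_integral \<alpha> a g' t)"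
    using assms(2) by (intro continuous_intros continuous_on_RL_left_integral)
  then show ?thesis
    by (rule continuous_on_eq) (use caputo_left_eq_RL_left_integral[OF assms(1) _ g'] in auto)
qed

lemma caputo_left_add_scaled:
  assumes "a < b" "\<alpha> < 1" "t \<in> {a..b}" "C1_on {a..b} f" "C1_on {a..b} g"
  shows "caputo_left \<alpha> a b (\<lambda>\<tau>. f \<tau> + c * g \<tau>) t = caputo_left \<alpha> a b f t + c * caputo_left \<alpha> a b g t"
proof -
  obtain f' where f': "\<And>t. t \<in> {a..b} \<Longrightarrow> (f has_vector_derivative f' t) (at t within {a..b})"
      and f'_cont: "continuous_on {a..b} f'"
    using assms(4) unfolding C1_on_real_iff by blast
  obtain g' where g': "\<And>t. t \<in> {a..b} \<Longrightarrow> (g has_vector_derivative g' t) (at t within {a..b})"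
      and g'_cont: "continuous_on {a..b} g'"
    using assms(5) unfolding C1_on_real_iff by blast
  have fg': "((\<lambda>\<tau>. f \<tau> + c * g \<tau>) has_vector_derivative f' t + c * g' t) (at t within {a..b})"
    if "t \<in> {a..b}" for t
    using f'[OF that] g'[OF that] by (auto intro!: derivative_eq_intros)
  have kernel_integrable: "(\<lambda>\<tau>. (t - \<tau>) powr (- \<alpha>) * h \<tau>) integrable_on {a..t}" if "continuous_on {a..b} h" for h
  proof (cases "t = a")
    case False
    then show ?thesis
      using assms(2,3) continuous_on_subset[OF that]
      by (intro has_integral_integrable[OF has_integral_RL_left_kernel_rescaled]) auto
  qed (use integrable_on_refl[of _ a] in \<open>simp add: cbox_interval\<close>)
  have "RL_left_integral \<alpha> a (\<lambda>\<tau>. f' \<tau> + c * g' \<tau>) t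
      = RL_left_integral \<alpha> a f' t + c * RL_left_integral \<alpha> a g' t"
    unfolding RL_left_integral_def distrib_left mult.left_commute[of _ c]
    using kernel_integrable[OF f'_cont] kernel_integrable[OF g'_cont]
    by (simp add: integral_add integrable_on_mult_right)
  moreover note caputo_left_eq_RL_left_integral[OF assms(1,3) f']
  moreover note caputo_left_eq_RL_left_integral[OF assms(1,3) g']
  moreover note caputo_left_eq_RL_left_integral[OF assms(1,3) fg']
  ultimately show ?thesis
    by (simp add: add_divide_distrib)
qed

lemma caputo_vec_add_scaled:
  assumes "a < b" "\<And>j. \<alpha> j < 1" "t \<in> {a..b}"
    and "\<And>j. C1_on {a..b} (\<lambda>\<tau>. x \<tau> $ j)" "\<And>j. C1_on {a..b} (\<lambda>\<tau>. y \<tau> $ j)"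
  shows "caputo_vec \<alpha> a b (\<lambda>\<tau>. x \<tau> + c *\<^sub>R y \<tau>) t = caputo_vec \<alpha> a b x t + c *\<^sub>R caputo_vec \<alpha> a b y t"
  using caputo_left_add_scaled[OF assms(1,2,3,4,5)]
  by (simp add: caputo_vec_def vec_eq_iff)

lemma continuous_on_caputo_vec:
  assumes "a < b" "\<And>j. \<alpha> j < 1" "\<And>j. C1_on {a..b} (\<lambda>\<tau>. y \<tau> $ j)"
  shows "continuous_on {a..b} (caputo_vec \<alpha> a b y)"
  unfolding caputo_vec_def
  by (intro continuous_on_vec_lambda continuous_on_caputo_left assms)

section \<open>Infinitesimal generators along a curve\<close>

lemma partial_derivative_eq_blinfun_apply:
  fixes h :: "'a::real_normed_vector \<times> 'b::real_normed_vector \<times> real \<Rightarrow> real"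
  assumes "t \<in> A" "\<epsilon> > 0"
    and "(h has_derivative blinfun_apply H) (at (t, y, 0) within A \<times> UNIV \<times> {-\<epsilon><..<\<epsilon>})"
    and "((\<lambda>s. h (t, y, s)) has_real_derivative d) (at 0)"
  shows "d = H (0, 0, 1)"
proof -
  have "((\<lambda>s. (t, y, s)) has_derivative (\<lambda>s. (0, 0, s))) (at 0 within {-\<epsilon><..<\<epsilon>})"
    by (intro derivative_eq_intros) auto
  moreover have "(h has_derivative blinfun_apply H) (at (t, y, 0) within (\<lambda>s. (t, y, s)) ` {-\<epsilon><..<\<epsilon>})"
    using assms(1) by (intro has_derivative_subset[OF assms(3)]) auto
  ultimately have "((h \<circ> (\<lambda>s. (t, y, s))) has_derivative H \<circ> (\<lambda>s. (0, 0, s))) (at 0 within {-\<epsilon><..<\<epsilon>})"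
    by (rule diff_chain_within)
  then have "((\<lambda>s. h (t, y, s)) has_derivative (\<lambda>s. H (0, 0, s))) (at 0 within {-\<epsilon><..<\<epsilon>})"
    unfolding o_def .
  moreover have "at (0::real) within {-\<epsilon><..<\<epsilon>} = at 0"
    using assms(2) by (intro at_within_open) auto
  ultimately have "((\<lambda>s. h (t, y, s)) has_derivative (\<lambda>s. H (0, 0, s))) (at 0)"
    by simp
  moreover have "((\<lambda>s. h (t, y, s)) has_derivative (*) d) (at 0)"
    using assms(4) by (simp add: has_field_derivative_def)
  ultimately have "(\<lambda>s. H (0, 0, s)) = (*) d"
    by (rule has_derivative_unique)
  then show ?thesis
    by (metis mult.right_neutral)
qed

text \<open>By the previous lemma \<open>\<xi> t y = h' (t, y, 0) (0, 0, 1)\<close>, and \<open>h'\<close> is \<open>C\<^sup>1\<close>.\<close>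

lemma C1_on_generator_along_curve:
  fixes h :: "real \<times> 'v::real_normed_vector \<times> real \<Rightarrow> real"
    and \<xi> :: "real \<Rightarrow> 'v \<Rightarrow> real" and x :: "real \<Rightarrow> 'v"
  assumes "\<epsilon> > 0" "C1_on {a..b} x"
    and "C2_on ({a..b} \<times> UNIV \<times> {-\<epsilon><..<\<epsilon>}) h"
    and "\<And>t y. t \<in> {a..b} \<Longrightarrow> ((\<lambda>s. h (t, y, s)) has_real_derivative \<xi> t y) (at 0)"
  shows "C1_on {a..b} (\<lambda>t. \<xi> t (x t))"
proof -
  define S where "S = {a..b} \<times> (UNIV :: 'v set) \<times> {-\<epsilon><..<\<epsilon>}"
  obtain H' where H': "\<And>q. q \<in> S \<Longrightarrow> (h has_derivative blinfun_apply (H' q)) (at q within S)"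
      and "C1_on S H'"
    using assms(3) unfolding C2_on_def S_def by blast
  then obtain H'' where H'': "\<And>q. q \<in> S \<Longrightarrow> (H' has_derivative blinfun_apply (H'' q)) (at q within S)"
      and H''_cont: "continuous_on S H''"
    unfolding C1_on_def by blast
  obtain x' where x': "\<And>t. t \<in> {a..b} \<Longrightarrow> (x has_vector_derivative x' t) (at t within {a..b})"
      and x'_cont: "continuous_on {a..b} x'"
    using assms(2) unfolding C1_on_real_iff by blast
  define c where "c t = (t, x t, 0::real)" for t
  have c_S: "c t \<in> S" if "t \<in> {a..b}" for t
    using assms(1) that unfolding c_def S_def by auto
  have \<xi>_eq: "\<xi> t (x t) = H' (c t) (0, 0, 1)" if "t \<in> {a..b}" for t
    using partial_derivative_eq_blinfun_apply[OF that assms(1) _ assms(4)[OF that]] H' c_S[OF that]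
    unfolding c_def S_def by blast
  have "((\<lambda>t. H' (c t) (0, 0, 1)) has_vector_derivative H'' (c t) (1, x' t, 0) (0, 0, 1))
      (at t within {a..b})" if t: "t \<in> {a..b}" for t
  proof -
    have "(c has_vector_derivative (1, x' t, 0)) (at t within {a..b})"
      unfolding c_def using x'[OF t]
      by (intro has_vector_derivative_Pair has_vector_derivative_const) (auto intro: derivative_intros)
    moreover have "(H' has_derivative blinfun_apply (H'' (c t))) (at (c t) within c ` {a..b})"
      using c_S by (intro has_derivative_subset[OF H''[OF c_S[OF t]]]) auto
    ultimately have "((H' \<circ> c) has_derivative H'' (c t) \<circ> (\<lambda>u. u *\<^sub>R (1, x' t, 0))) (at t within {a..b})"
      unfolding has_vector_derivative_def by (rule diff_chain_within)
    then have "((\<lambda>t. H' (c t)) has_vector_derivative H'' (c t) (1, x' t, 0)) (at t within {a..b})"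
      unfolding has_vector_derivative_def o_def blinfun.scaleR_right .
    then show ?thesis
      by (rule bounded_linear.has_vector_derivative[OF blinfun.bounded_linear_left])
  qed
  moreover have "continuous_on {a..b} (\<lambda>t. H'' (c t) (1, x' t, 0) (0, 0, 1))"
    using C1_on_imp_continuous_on[OF assms(2)] c_S x'_cont unfolding c_def
    by (intro continuous_intros continuous_on_compose2[OF H''_cont]) auto
  ultimately show ?thesis
    unfolding C1_on_real_iff
    by (intro exI[of _ "\<lambda>t. H'' (c t) (1, x' t, 0) (0, 0, 1)"]) (auto intro: has_vector_derivative_transform[OF _ \<xi>_eq])
qed

section \<open>The first variation of an invariant family vanishes\<close>

lemma no_downcrossing:
  fixes f f' :: "real \<Rightarrow> real"
  assumes "u < w" "continuous_on {u..w} f" "c2 < c1" "c1 \<le> f u" "f w \<le> c2"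
    and "\<And>t. t \<in> {u<..<w} \<Longrightarrow> (f has_real_derivative f' t) (at t)"
    and "\<And>t. t \<in> {u<..<w} \<Longrightarrow> c2 < f t \<Longrightarrow> f t < c1 \<Longrightarrow> 0 \<le> f' t"
  shows False
proof -
  define A where "A = {t \<in> {u..w}. c1 \<le> f t}"
  define u' where "u' = Sup A"
  have "closed A"
    unfolding A_def by (rule continuous_on_closed_Collect_le) (use assms(2) in auto)
  moreover have "u \<in> A" "bdd_above A"
    using assms(1,4) unfolding A_def by (auto intro: bdd_aboveI[of _ w])
  ultimately have u': "u' \<in> {u..w}" "c1 \<le> f u'"
    using closed_contains_Sup[of A] unfolding u'_def A_def by auto
  have below_c1: "f t < c1" if "t \<in> {u'<..w}" for t
    using that u' cSup_upper[OF _ \<open>bdd_above A\<close>, of t] unfolding u'_def A_def by force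
  have "u' < w"
    using u' assms(3,5) by (cases "u' = w") auto
  define B where "B = {t \<in> {u'..w}. f t \<le> c2}"
  define w' where "w' = Inf B"
  have "closed B"
    unfolding B_def by (rule continuous_on_closed_Collect_le)
      (use assms(2) u' in \<open>auto intro: continuous_on_subset\<close>)
  moreover have "w \<in> B" "bdd_below B"
    using assms(5) \<open>u' < w\<close> unfolding B_def by (auto intro: bdd_belowI[of _ u'])
  ultimately have w': "w' \<in> {u'..w}" "f w' \<le> c2"
    using closed_contains_Inf[of B] unfolding w'_def B_def by auto
  have above_c2: "c2 < f t" if "t \<in> {u'..<w'}" for t
    using that w' cInf_lower[OF _ \<open>bdd_below B\<close>, of t] unfolding w'_def B_def by force
  have "u' < w'"
    using w' u' assms(3) by (cases "w' = u'") auto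
  have "f u' \<le> f w'"
  proof (rule DERIV_nonneg_imp_increasing_open[of u' w' f])
    show "continuous_on {u'..w'} f"
      using assms(2) u' w' by (auto intro: continuous_on_subset)
    fix t assume "u' < t" "t < w'"
    then show "\<exists>y. (f has_real_derivative y) (at t) \<and> 0 \<le> y"
      using u' w' assms(6,7)[of t] below_c1[of t] above_c2[of t] by auto
  qed (use \<open>u' < w'\<close> in auto)
  then show False
    using u' w' assms(3) by linarith
qed

text \<open>A function whose slope is at least \<open>\<kappa>\<close> whenever it lies in the band \<open>[-\<beta>, \<beta>]\<close> cannot
  leave the band (it could not re-enter the inner half) and therefore climbs at least
  \<open>\<kappa> (q - p)\<close>.\<close>

lemma slope_in_band_bound:
  fixes f f' :: "real \<Rightarrow> real"
  assumes "p < q" "continuous_on {p..q} f"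
    and deriv: "\<And>t. t \<in> {p<..<q} \<Longrightarrow> (f has_real_derivative f' t) (at t)"
    and slope: "\<And>t. t \<in> {p<..<q} \<Longrightarrow> \<bar>f t\<bar> \<le> \<beta> \<Longrightarrow> \<kappa> \<le> f' t"
    and "0 \<le> \<kappa>" "0 < \<beta>" "\<bar>f p\<bar> \<le> \<beta> / 2" "\<bar>f q\<bar> \<le> \<beta> / 2"
  shows "\<kappa> * (q - p) \<le> \<beta>"
proof (cases "\<forall>t\<in>{p..q}. \<bar>f t\<bar> \<le> \<beta>")
  case True
  have "f p - \<kappa> * p \<le> f q - \<kappa> * q"
  proof (rule DERIV_nonneg_imp_increasing_open[of p q])
    fix t assume "p < t" "t < q"
    then show "\<exists>y. ((\<lambda>t. f t - \<kappa> * t) has_real_derivative y) (at t) \<and> 0 \<le> y"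
      using True deriv[of t] slope[of t] by (auto intro!: derivative_eq_intros)
  qed (use assms(1,2) in \<open>auto intro!: continuous_intros\<close>)
  then show ?thesis
    using assms(7,8) by (simp add: algebra_simps abs_le_iff)
next
  case False
  then obtain t0 where t0: "t0 \<in> {p..q}" "\<beta> < \<bar>f t0\<bar>"
    by (auto simp: not_le)
  show ?thesis
  proof (cases "0 < f t0")
    case True
    then have "t0 < q"
      using t0 assms(6,8) by (cases "t0 = q") auto
    have False
    proof (rule no_downcrossing[of t0 q f "\<beta> / 2" \<beta> f'])
      show "continuous_on {t0..q} f"
        using t0 by (intro continuous_on_subset[OF assms(2)]) auto
      fix t assume "t \<in> {t0<..<q}"
      then show "(f has_real_derivative f' t) (at t)" "\<beta> / 2 < f t \<Longrightarrow> f t < \<beta> \<Longrightarrow> 0 \<le> f' t"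
        using t0 deriv[of t] slope[of t] assms(5) by auto
    qed (use \<open>t0 < q\<close> t0 True assms(6,8) in auto)
    then show ?thesis ..
  next
    case False
    then have "p < t0"
      using t0 assms(6,7) by (cases "t0 = p") auto
    have False
    proof (rule no_downcrossing[of p t0 f "- \<beta>" "- \<beta> / 2" f'])
      show "continuous_on {p..t0} f"
        using t0 by (intro continuous_on_subset[OF assms(2)]) auto
      fix t assume "t \<in> {p<..<t0}"
      then show "(f has_real_derivative f' t) (at t)" "- \<beta> < f t \<Longrightarrow> f t < - \<beta> / 2 \<Longrightarrow> 0 \<le> f' t"
        using t0 deriv[of t] slope[of t] assms(5) by auto
    qed (use \<open>p < t0\<close> t0 False assms(6,7) in auto)
    then show ?thesis ..
  qed
qed

lemma uniform_linearization:
  fixes L :: "'a::real_normed_vector \<Rightarrow> 'b::real_normed_vector"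
  assumes "convex S" "\<And>q. q \<in> S \<Longrightarrow> (L has_derivative blinfun_apply (L' q)) (at q within S)"
    and "continuous_on S L'" "q0 \<in> S" "0 < \<eta>"
  obtains r where "0 < r"
    and "\<And>q1 q2. q1 \<in> S \<Longrightarrow> q2 \<in> S \<Longrightarrow> dist q1 q0 < r \<Longrightarrow> dist q2 q0 < r \<Longrightarrow>
           norm (L q2 - L q1 - L' q0 (q2 - q1)) \<le> \<eta> * norm (q2 - q1)"
proof -
  obtain r where "0 < r" and r: "\<And>q. q \<in> S \<Longrightarrow> dist q q0 < r \<Longrightarrow> dist (L' q) (L' q0) < \<eta>"
    using assms(3,4,5) unfolding continuous_on_iff by blast
  define T where "T = S \<inter> ball q0 r"
  have "norm ((L q2 - L' q0 q2) - (L q1 - L' q0 q1)) \<le> \<eta> * norm (q2 - q1)"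
    if "q1 \<in> T" "q2 \<in> T" for q1 q2
  proof (rule differentiable_bound[of T])
    show "convex T"
      unfolding T_def using assms(1) by (intro convex_Int convex_ball)
    fix q assume q: "q \<in> T"
    then have "(L has_derivative blinfun_apply (L' q)) (at q within T)"
      using assms(2) has_derivative_subset unfolding T_def by blast
    then show "((\<lambda>q. L q - L' q0 q) has_derivative blinfun_apply (L' q - L' q0)) (at q within T)"
      by (auto intro!: derivative_eq_intros simp: blinfun.diff_left)
    show "onorm (blinfun_apply (L' q - L' q0)) \<le> \<eta>"
      using r[of q] q unfolding T_def
      by (simp add: norm_blinfun.rep_eq[symmetric] dist_norm norm_minus_commute less_imp_le)
  qed (use that in auto)
  then show ?thesis
    using \<open>0 < r\<close> by (intro that[of r]) (auto simp: T_def dist_commute algebra_simps blinfun.diff_right)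
qed

lemma eventually_at_within_Icc_obtain_interval:
  fixes t0 :: real
  assumes "a < b" "t0 \<in> {a..b}" "eventually P (at t0 within {a..b})" "P t0"
  obtains t1 t2 where "a \<le> t1" "t1 < t2" "t2 \<le> b" "\<And>t. t \<in> {t1..t2} \<Longrightarrow> P t"
proof -
  obtain d where "0 < d" and d: "\<And>t. t \<in> {a..b} \<Longrightarrow> t \<noteq> t0 \<Longrightarrow> dist t t0 < d \<Longrightarrow> P t"
    using assms(3) unfolding eventually_at by blast
  show ?thesis
  proof (rule that[of "max a (t0 - d / 2)" "min b (t0 + d / 2)"])
    fix t assume "t \<in> {max a (t0 - d / 2)..min b (t0 + d / 2)}"
    then show "P t"
      using d[of t] assms(4) \<open>0 < d\<close> by (cases "t = t0") (auto simp: dist_real_def)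
  qed (use assms(1,2) \<open>0 < d\<close> in auto)
qed

lemma linearization_difference_quotient:
  fixes L :: "'a::real_normed_vector \<Rightarrow> real" and \<Lambda> :: "'a \<Rightarrow>\<^sub>L real"
  assumes "s \<noteq> 0" "norm (L (q + s *\<^sub>R v) - L q - \<Lambda> (s *\<^sub>R v)) \<le> \<eta> * norm (s *\<^sub>R v)"
  shows "\<bar>(L (q + s *\<^sub>R v) - L q) / s - \<Lambda> v\<bar> \<le> \<eta> * norm v"
proof -
  have "\<bar>(L (q + s *\<^sub>R v) - L q) / s - \<Lambda> v\<bar> = \<bar>L (q + s *\<^sub>R v) - L q - \<Lambda> (s *\<^sub>R v)\<bar> / \<bar>s\<bar>"
    using assms(1) by (simp add: blinfun.scaleR_right diff_divide_distrib abs_divide[symmetric])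
  also have "\<dots> \<le> \<eta> * norm (s *\<^sub>R v) / \<bar>s\<bar>"
    using assms by (intro divide_right_mono) auto
  finally show ?thesis
    using assms(1) by simp
qed

lemma first_variation_difference_quotient_bound:
  fixes L :: "'a::real_normed_vector \<Rightarrow> real" and L' :: "'a \<Rightarrow> 'a \<Rightarrow>\<^sub>L real"
    and p e :: "real \<Rightarrow> 'a" and u :: 'a
  assumes ab: "a < b"
    and S: "convex S" "\<And>q. q \<in> S \<Longrightarrow> (L has_derivative blinfun_apply (L' q)) (at q within S)"
      "continuous_on S L'"
    and in_S: "\<And>t s r. t \<in> {a..b} \<Longrightarrow> p t + s *\<^sub>R e t + r *\<^sub>R u \<in> S"
    and p_cont: "continuous_on {a..b} p" and e_cont: "continuous_on {a..b} e"
    and t0: "t0 \<in> {a..b}" and pos: "0 < L' (p t0) (e t0)"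
  obtains t1 t2 \<delta> r where "a \<le> t1" "t1 < t2" "t2 \<le> b" "0 < \<delta>" "0 < r"
    "\<delta> < L' (p t0) (e t0) / 4 * (t2 - t1)"
    "\<And>s t \<theta>. s \<noteq> 0 \<Longrightarrow> \<bar>s\<bar> < r \<Longrightarrow> t \<in> {t1..t2} \<Longrightarrow> \<bar>\<theta>\<bar> \<le> \<delta> \<Longrightarrow>
       L' (p t0) (e t0) / 4 \<le> (L (p t + s *\<^sub>R (e t + \<theta> *\<^sub>R u)) - L (p t)) / s"
proof -
  define \<Lambda> where "\<Lambda> = L' (p t0)"
  define c where "c = \<Lambda> (e t0) / 2"
  have "0 < c"
    using pos unfolding c_def \<Lambda>_def by simp
  define M where "M = norm (e t0) + 1"
  \<comment> \<open>\<open>\<eta>\<close> and \<open>\<delta>\<close> are chosen so that the linearization error and the drift \<open>\<theta> \<Lambda> u\<close>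
    each cost at most \<open>c / 4\<close> of the slope \<open>\<Lambda> (e t) > c\<close>.\<close>
  define \<eta> where "\<eta> = c / (4 * (M + norm u))"
  have "0 < M + norm u"
    unfolding M_def using norm_ge_zero[of "e t0"] norm_ge_zero[of u] by linarith
  then have "0 < \<eta>" and \<eta>_M: "\<eta> * (M + norm u) = c / 4"
    unfolding \<eta>_def using \<open>0 < c\<close> by (auto simp: field_simps)
  have p_S: "p t \<in> S" if "t \<in> {a..b}" for t
    using in_S[OF that, of 0 0] by simp
  obtain r where "0 < r" and lin: "\<And>q1 q2. q1 \<in> S \<Longrightarrow> q2 \<in> S \<Longrightarrow> dist q1 (p t0) < r \<Longrightarrow>
      dist q2 (p t0) < r \<Longrightarrow> norm (L q2 - L q1 - \<Lambda> (q2 - q1)) \<le> \<eta> * norm (q2 - q1)"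
    using uniform_linearization[OF S p_S[OF t0] \<open>0 < \<eta>\<close>] unfolding \<Lambda>_def by blast
  have "((\<lambda>t. \<Lambda> (e t)) \<longlongrightarrow> 2 * c) (at t0 within {a..b})"
      "((\<lambda>t. norm (e t)) \<longlongrightarrow> M - 1) (at t0 within {a..b})"
      "(p \<longlongrightarrow> p t0) (at t0 within {a..b})"
    using e_cont p_cont t0 unfolding c_def M_def continuous_on_def
    by (auto intro!: tendsto_intros)
  then have "eventually (\<lambda>t. c < \<Lambda> (e t) \<and> norm (e t) < M \<and> dist (p t) (p t0) < r / 2)
      (at t0 within {a..b})"
    using \<open>0 < c\<close> \<open>0 < r\<close>
    by (intro eventually_conj order_tendstoD(1) order_tendstoD(2) tendstoD) (auto simp: dist_commute)
  moreover have "c < \<Lambda> (e t0) \<and> norm (e t0) < M \<and> dist (p t0) (p t0) < r / 2"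
    using \<open>0 < c\<close> \<open>0 < r\<close> unfolding c_def M_def by simp
  ultimately obtain t1 t2 where t12: "a \<le> t1" "t1 < t2" "t2 \<le> b"
    and near_t0: "\<And>t. t \<in> {t1..t2} \<Longrightarrow> c < \<Lambda> (e t) \<and> norm (e t) < M \<and> dist (p t) (p t0) < r / 2"
    by (rule eventually_at_within_Icc_obtain_interval[OF ab t0]) auto
  define \<delta> where "\<delta> = min 1 (min (c / (4 * (\<bar>\<Lambda> u\<bar> + 1))) (c * (t2 - t1) / 4))"
  have \<delta>: "0 < \<delta>" "\<delta> \<le> 1" "\<delta> * \<bar>\<Lambda> u\<bar> \<le> c / 4" "\<delta> \<le> c * (t2 - t1) / 4"
  proof -
    have "\<delta> * \<bar>\<Lambda> u\<bar> \<le> c / (4 * (\<bar>\<Lambda> u\<bar> + 1)) * (\<bar>\<Lambda> u\<bar> + 1)"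
      using \<open>0 < c\<close> unfolding \<delta>_def by (intro mult_mono) auto
    also have "\<dots> = c / 4"
      using abs_ge_zero[of "\<Lambda> u"] by (simp add: field_simps)
    finally show "\<delta> * \<bar>\<Lambda> u\<bar> \<le> c / 4" .
    show "0 < \<delta>"
      using \<open>0 < c\<close> t12 abs_ge_zero[of "\<Lambda> u"] unfolding \<delta>_def by simp
    show "\<delta> \<le> c * (t2 - t1) / 4"
      unfolding \<delta>_def by (intro min.coboundedI2 min.cobounded2)
  qed (simp add: \<delta>_def)
  show ?thesis
  proof (rule that[OF t12 \<delta>(1), of "r / (2 * (M + norm u))"])
    show "0 < r / (2 * (M + norm u))"
      using \<open>0 < r\<close> \<open>0 < M + norm u\<close> by simp
    show "\<delta> < L' (p t0) (e t0) / 4 * (t2 - t1)"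
      using \<delta>(1,4) unfolding c_def \<Lambda>_def by (simp add: field_simps)
    fix s t \<theta>
    assume "s \<noteq> 0" "\<bar>s\<bar> < r / (2 * (M + norm u))" "t \<in> {t1..t2}" "\<bar>\<theta>\<bar> \<le> \<delta>"
    define v where "v = e t + \<theta> *\<^sub>R u"
    have t: "t \<in> {a..b}" "c < \<Lambda> (e t)" "norm (e t) < M" "dist (p t) (p t0) < r / 2"
      using \<open>t \<in> {t1..t2}\<close> t12 near_t0[of t] by auto
    have "norm v \<le> M + norm u"
      using t(3) mult_right_mono[OF order.trans[OF \<open>\<bar>\<theta>\<bar> \<le> \<delta>\<close> \<delta>(2)], of "norm u"]
        norm_triangle_ineq[of "e t" "\<theta> *\<^sub>R u"] unfolding v_def by simp
    then have "\<bar>s\<bar> * norm v \<le> \<bar>s\<bar> * (M + norm u)"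
      by (simp add: mult_left_mono)
    also have "\<dots> < r / (2 * (M + norm u)) * (M + norm u)"
      using \<open>\<bar>s\<bar> < r / (2 * (M + norm u))\<close> \<open>0 < M + norm u\<close> by (intro mult_strict_right_mono)
    also have "\<dots> = r / 2"
      using \<open>0 < M + norm u\<close> by (simp add: field_simps)
    finally have "\<bar>s\<bar> * norm v < r / 2" .
    then have "dist (p t + s *\<^sub>R v) (p t0) < r"
      using t(4) norm_triangle_ineq[of "p t - p t0" "s *\<^sub>R v"] by (simp add: dist_norm algebra_simps)
    moreover have "p t + s *\<^sub>R v \<in> S"
      using in_S[OF t(1), of s "s * \<theta>"] unfolding v_def by (simp add: scaleR_add_right add.assoc)
    ultimately have "\<bar>(L (p t + s *\<^sub>R v) - L (p t)) / s - \<Lambda> v\<bar> \<le> \<eta> * norm v"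
      using lin[OF p_S[OF t(1)], of "p t + s *\<^sub>R v"] t(4) \<open>0 < r\<close>
      by (intro linearization_difference_quotient[OF \<open>s \<noteq> 0\<close>]) auto
    also have "\<dots> \<le> c / 4"
      using \<open>norm v \<le> M + norm u\<close> \<open>0 < \<eta>\<close> \<eta>_M by (metis mult_left_mono less_imp_le)
    finally have "\<bar>(L (p t + s *\<^sub>R v) - L (p t)) / s - \<Lambda> v\<bar> \<le> c / 4" .
    moreover have "c - c / 4 \<le> \<Lambda> v"
      using t(2) \<delta>(3) mult_right_mono[OF \<open>\<bar>\<theta>\<bar> \<le> \<delta>\<close>, of "\<bar>\<Lambda> u\<bar>"] abs_mult[of \<theta> "\<Lambda> u"]
      unfolding v_def by (simp add: blinfun.add_right blinfun.scaleR_right)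
    ultimately show "L' (p t0) (e t0) / 4 \<le> (L (p t + s *\<^sub>R (e t + \<theta> *\<^sub>R u)) - L (p t)) / s"
      unfolding v_def c_def \<Lambda>_def by linarith
  qed
qed

lemma invariant_family_first_variation_nonpos:
  fixes L :: "'a::real_normed_vector \<Rightarrow> real" and L' :: "'a \<Rightarrow> 'a \<Rightarrow>\<^sub>L real"
    and p e :: "real \<Rightarrow> 'a" and u :: 'a and z :: "real \<Rightarrow> real" and Z :: "real \<Rightarrow> real \<Rightarrow> real"
  assumes ab: "a < b" and "0 < \<epsilon>"
    and S: "convex S" "\<And>q. q \<in> S \<Longrightarrow> (L has_derivative blinfun_apply (L' q)) (at q within S)"
      "continuous_on S L'"
    and in_S: "\<And>t s r. t \<in> {a..b} \<Longrightarrow> p t + s *\<^sub>R e t + r *\<^sub>R u \<in> S"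
    and p_cont: "continuous_on {a..b} p" and e_cont: "continuous_on {a..b} e"
    and z_ode: "\<And>t. t \<in> {a..b} \<Longrightarrow> (z has_real_derivative L (p t)) (at t within {a..b})"
    and Z_ode: "\<And>s t. s \<in> {-\<epsilon><..<\<epsilon>} \<Longrightarrow> t \<in> {a..b} \<Longrightarrow>
      (Z s has_real_derivative L (p t + s *\<^sub>R e t + (Z s t - z t) *\<^sub>R u)) (at t within {a..b})"
    and Z_0: "\<And>t. t \<in> {a..b} \<Longrightarrow> Z 0 t = z t"
    and invariant: "\<And>t. t \<in> {a..b} \<Longrightarrow> ((\<lambda>s. Z s t) has_real_derivative 0) (at 0)"
    and t0: "t0 \<in> {a..b}"
  shows "L' (p t0) (e t0) \<le> 0"
proof (rule ccontr)
  assume "\<not> L' (p t0) (e t0) \<le> 0"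
  then have pos: "0 < L' (p t0) (e t0)"
    by simp
  obtain t1 t2 \<delta> r where t12: "a \<le> t1" "t1 < t2" "t2 \<le> b" and "0 < \<delta>" "0 < r"
    and short: "\<delta> < L' (p t0) (e t0) / 4 * (t2 - t1)"
    and slope: "\<And>s t \<theta>. s \<noteq> 0 \<Longrightarrow> \<bar>s\<bar> < r \<Longrightarrow> t \<in> {t1..t2} \<Longrightarrow> \<bar>\<theta>\<bar> \<le> \<delta> \<Longrightarrow>
       L' (p t0) (e t0) / 4 \<le> (L (p t + s *\<^sub>R (e t + \<theta> *\<^sub>R u)) - L (p t)) / s"
    using first_variation_difference_quotient_bound[OF ab S in_S p_cont e_cont t0 pos] by blast
  have quotient_tendsto: "((\<lambda>s. (Z s t - z t) / s) \<longlongrightarrow> 0) (at 0)" if "t \<in> {a..b}" for t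
    using invariant[OF that] Z_0[OF that] unfolding has_field_derivative_iff by simp
  have "eventually (\<lambda>s. dist ((Z s t) / s - z t / s) 0 < \<delta> / 2) (at 0)" if "t \<in> {t1, t2}" for t
    using that t12 \<open>0 < \<delta>\<close> by (intro tendstoD[OF quotient_tendsto, unfolded diff_divide_distrib]) auto
  then have "eventually (\<lambda>s. dist ((Z s t1 - z t1) / s) 0 < \<delta> / 2) (at 0)"
      "eventually (\<lambda>s. dist ((Z s t2 - z t2) / s) 0 < \<delta> / 2) (at 0)"
    unfolding diff_divide_distrib by auto
  moreover have "eventually (\<lambda>s. dist s 0 < min \<epsilon> r) (at 0)"
    using \<open>0 < \<epsilon>\<close> \<open>0 < r\<close> by (intro tendstoD[OF tendsto_ident_at]) auto
  ultimately have "eventually (\<lambda>s. s \<noteq> 0 \<and> dist ((Z s t1 - z t1) / s) 0 < \<delta> / 2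
      \<and> dist ((Z s t2 - z t2) / s) 0 < \<delta> / 2 \<and> dist s 0 < min \<epsilon> r) (at 0)"
    by (intro eventually_conj eventually_neq_at_within)
  then obtain s where "s \<noteq> 0" and s_ends: "dist ((Z s t1 - z t1) / s) 0 < \<delta> / 2"
      "dist ((Z s t2 - z t2) / s) 0 < \<delta> / 2" and "dist s 0 < min \<epsilon> r"
    using eventually_happens'[OF at_neq_bot] by blast
  then have "s \<in> {-\<epsilon><..<\<epsilon>}" "\<bar>s\<bar> < r"
    by auto
  define f where "f t = (Z s t - z t) / s" for t
  have Z_ode_s: "(Z s has_real_derivative L (p t + s *\<^sub>R (e t + f t *\<^sub>R u))) (at t within {a..b})"
    if "t \<in> {a..b}" for t
  proof -
    have "s * f t = Z s t - z t"
      using \<open>s \<noteq> 0\<close> unfolding f_def by simp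
    then have "p t + s *\<^sub>R e t + (Z s t - z t) *\<^sub>R u = p t + s *\<^sub>R (e t + f t *\<^sub>R u)"
      unfolding scaleR_add_right scaleR_scaleR by (simp add: add.assoc)
    with Z_ode[OF \<open>s \<in> {-\<epsilon><..<\<epsilon>}\<close> that] show ?thesis
      by (simp only:)
  qed
  have f_deriv: "(f has_real_derivative (L (p t + s *\<^sub>R (e t + f t *\<^sub>R u)) - L (p t)) / s) (at t)"
    if "t \<in> {t1<..<t2}" for t
  proof -
    have t: "t \<in> {a..b}" "t \<in> interior {a..b}"
      using that t12 by auto
    have "((\<lambda>t. (Z s t - z t) / s) has_real_derivative (L (p t + s *\<^sub>R (e t + f t *\<^sub>R u)) - L (p t)) / s)
        (at t within {a..b})"
      by (intro DERIV_cdivide DERIV_diff Z_ode_s[OF t(1)] z_ode[OF t(1)])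
    then show ?thesis
      unfolding f_def[abs_def, symmetric]
      using at_within_interior[OF t(2)] by simp
  qed
  have f_cont: "continuous_on {t1..t2} f"
  proof -
    have "continuous_on {a..b} (Z s)" "continuous_on {a..b} z"
      using DERIV_continuous_on[OF Z_ode_s] DERIV_continuous_on[OF z_ode] by auto
    then show ?thesis
      unfolding f_def using t12 \<open>s \<noteq> 0\<close> by (auto intro!: continuous_intros intro: continuous_on_subset)
  qed
  have "L' (p t0) (e t0) / 4 * (t2 - t1) \<le> \<delta>"
  proof (rule slope_in_band_bound[OF t12(2) f_cont f_deriv])
    show "L' (p t0) (e t0) / 4 \<le> (L (p t + s *\<^sub>R (e t + f t *\<^sub>R u)) - L (p t)) / s"
      if "t \<in> {t1<..<t2}" "\<bar>f t\<bar> \<le> \<delta>" for t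
      using slope[OF \<open>s \<noteq> 0\<close> \<open>\<bar>s\<bar> < r\<close> _ that(2)] that(1) by auto
    show "\<bar>f t1\<bar> \<le> \<delta> / 2" "\<bar>f t2\<bar> \<le> \<delta> / 2"
      using s_ends unfolding f_def dist_real_def by simp_all
  qed (use pos \<open>0 < \<delta>\<close> in simp_all)
  then show False
    using short by linarith
qed

lemma invariant_family_first_variation_zero:
  fixes L :: "'a::real_normed_vector \<Rightarrow> real" and L' :: "'a \<Rightarrow> 'a \<Rightarrow>\<^sub>L real"
    and p e :: "real \<Rightarrow> 'a" and u :: 'a and z :: "real \<Rightarrow> real" and Z :: "real \<Rightarrow> real \<Rightarrow> real"
  assumes "a < b" "0 < \<epsilon>"
    and "convex S" "\<And>q. q \<in> S \<Longrightarrow> (L has_derivative blinfun_apply (L' q)) (at q within S)"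
      "continuous_on S L'"
    and in_S: "\<And>t s r. t \<in> {a..b} \<Longrightarrow> p t + s *\<^sub>R e t + r *\<^sub>R u \<in> S"
    and "continuous_on {a..b} p" and e_cont: "continuous_on {a..b} e"
    and "\<And>t. t \<in> {a..b} \<Longrightarrow> (z has_real_derivative L (p t)) (at t within {a..b})"
    and Z_ode: "\<And>s t. s \<in> {-\<epsilon><..<\<epsilon>} \<Longrightarrow> t \<in> {a..b} \<Longrightarrow>
      (Z s has_real_derivative L (p t + s *\<^sub>R e t + (Z s t - z t) *\<^sub>R u)) (at t within {a..b})"
    and "\<And>t. t \<in> {a..b} \<Longrightarrow> Z 0 t = z t"
    and invariant: "\<And>t. t \<in> {a..b} \<Longrightarrow> ((\<lambda>s. Z s t) has_real_derivative 0) (at 0)"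
    and "t0 \<in> {a..b}"
  shows "L' (p t0) (e t0) = 0"
proof -
  have "L' (p t0) (e t0) \<le> 0"
    by (rule invariant_family_first_variation_nonpos[of a b \<epsilon> S L L' p e u z Z]) (use assms in auto)
  moreover have "L' (p t0) (- e t0) \<le> 0"
  proof (rule invariant_family_first_variation_nonpos[of a b \<epsilon> S L L' p "\<lambda>t. - e t" u z "\<lambda>s. Z (- s)"])
    fix t assume t: "t \<in> {a..b}"
    show "p t + s *\<^sub>R - e t + r *\<^sub>R u \<in> S" for s r
      using in_S[OF t, of "- s" r] by simp
    show "(Z (- s) has_real_derivative L (p t + s *\<^sub>R - e t + (Z (- s) t - z t) *\<^sub>R u)) (at t within {a..b})"
      if "s \<in> {-\<epsilon><..<\<epsilon>}" for s
      using Z_ode[OF _ t, of "- s"] that by auto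
    show "((\<lambda>s. Z (- s) t) has_real_derivative 0) (at 0)"
      using DERIV_mirror[of "\<lambda>s. Z s t" 0 0] invariant[OF t] by simp
  qed (use assms e_cont in \<open>auto intro: continuous_intros\<close>)
  ultimately show ?thesis
    by (simp add: blinfun.minus_right)
qed

section \<open>The fractional Noether identity\<close>

lemma linear_functional_vec_expansion:
  fixes l :: "real^'n \<Rightarrow> real"
  assumes "bounded_linear l"
  shows "l v = (\<Sum>j\<in>UNIV. l (axis j 1) * v $ j)"
proof -
  have "l v = l (\<Sum>j\<in>UNIV. v $ j *\<^sub>R axis j 1)"
    using basis_expansion[of v] by (simp add: scalar_mult_eq_scaleR)
  also have "\<dots> = (\<Sum>j\<in>UNIV. v $ j * l (axis j 1))"
    using assms by (simp add: bounded_linear.linear linear_sum linear_scale)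
  finally show ?thesis
    by (simp add: mult.commute)
qed

lemma blinfun_apply_Pair_vec_expansion:
  fixes B :: "(real \<times> (real^'n) \<times> (real^'n) \<times> real) \<Rightarrow>\<^sub>L real"
  shows "B (0, v, w, 0) = (\<Sum>j\<in>UNIV. B (0, axis j 1, 0, 0) * v $ j + B (0, 0, axis j 1, 0) * w $ j)"
proof -
  have "B (0, v, w, 0) = B (0, v, 0, 0) + B (0, 0, w, 0)"
    using blinfun.add_right[of B "(0, v, 0, 0)" "(0, 0, w, 0)"] by simp
  also have "B (0, v, 0, 0) = (\<Sum>j\<in>UNIV. B (0, axis j 1, 0, 0) * v $ j)"
    by (rule linear_functional_vec_expansion[of "\<lambda>v. B (0, v, 0, 0)"]) (intro bounded_linear_intros)
  also have "B (0, 0, w, 0) = (\<Sum>j\<in>UNIV. B (0, 0, axis j 1, 0) * w $ j)"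
    by (rule linear_functional_vec_expansion[of "\<lambda>w. B (0, 0, w, 0)"]) (intro bounded_linear_intros)
  finally show ?thesis
    by (simp add: sum.distrib)
qed

lemma sum_frac_D_Euler_Lagrange:
  fixes B :: "(real \<times> (real^'n) \<times> (real^'n) \<times> real) \<Rightarrow>\<^sub>L real"
    and P g :: "'n \<Rightarrow> real \<Rightarrow> real"
  assumes "\<And>j. P j t = lam * B (0, 0, axis j 1, 0)"
    and "\<And>j. lam * B (0, axis j 1, 0, 0) + RL_right (\<alpha> j) a b (P j) t = 0"
  shows "(\<Sum>j\<in>UNIV. frac_D (\<alpha> j) a b (P j) (g j) t)
       = lam * B (0, \<chi> j. g j t, \<chi> j. caputo_left (\<alpha> j) a b (g j) t, 0)"
proof -
  have "frac_D (\<alpha> j) a b (P j) (g j) t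
      = lam * (B (0, axis j 1, 0, 0) * g j t + B (0, 0, axis j 1, 0) * caputo_left (\<alpha> j) a b (g j) t)" for j
  proof -
    have "RL_right (\<alpha> j) a b (P j) t = - (lam * B (0, axis j 1, 0, 0))"
      using assms(2)[of j] by linarith
    then show ?thesis
      unfolding frac_D_def assms(1) by (simp add: algebra_simps)
  qed
  then show ?thesis
    by (subst blinfun_apply_Pair_vec_expansion) (simp add: sum_distrib_left)
qed

theorem theorem4p1:
  fixes a b za \<epsilon> :: real
    and \<alpha> :: "'n::finite \<Rightarrow> real"
    and x :: "real \<Rightarrow> (real^'n)"
    and z :: "real \<Rightarrow> real"
    and L :: "real \<times> (real^'n) \<times> (real^'n) \<times> real \<Rightarrow> real"
    and L' :: "real \<times> (real^'n) \<times> (real^'n) \<times> real \<Rightarrow> (real \<times> (real^'n) \<times> (real^'n) \<times> real) \<Rightarrow>\<^sub>L real"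
    and h :: "'n \<Rightarrow> real \<times> (real^'n) \<times> real \<Rightarrow> real"
    and \<xi> :: "'n \<Rightarrow> real \<Rightarrow> (real^'n) \<Rightarrow> real"
    and Z :: "real \<Rightarrow> real \<Rightarrow> real"
  assumes ab: "a < b"
    and alpha: "\<And>j. 0 < \<alpha> j \<and> \<alpha> j < 1"
    and x_C1: "C1_on {a..b} x"
    and Dx_C1: "C1_on {a..b} (caputo_vec \<alpha> a b x)"
    \<comment> \<open>L is C^1 on [a,b] x R^(2n+1), with Frechet derivative L'\<close>
    and L_deriv: "\<And>p. p \<in> {a..b} \<times> UNIV \<Longrightarrow>
                    (L has_derivative blinfun_apply (L' p)) (at p within {a..b} \<times> UNIV)"
    and L'_cont: "continuous_on ({a..b} \<times> UNIV) L'"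
    and z_init: "z a = za"
    and z_ode: "\<And>t. t \<in> {a..b} \<Longrightarrow>
                 (z has_real_derivative L (t, x t, caputo_vec \<alpha> a b x t, z t)) (at t within {a..b})"
    and RL_ex: "\<And>j t. t \<in> {a..b} \<Longrightarrow> RL_right_exists (\<alpha> j) a b
                 (\<lambda>t. exp (- integral {a..t} (\<lambda>\<tau>. L' (\<tau>, x \<tau>, caputo_vec \<alpha> a b x \<tau>, z \<tau>) (0, 0, 0, 1)))
                      * L' (t, x t, caputo_vec \<alpha> a b x t, z t) (0, 0, axis j 1, 0)) t"
    and RL_cont: "\<And>j. continuous_on {a..b} (RL_right (\<alpha> j) a b
                 (\<lambda>t. exp (- integral {a..t} (\<lambda>\<tau>. L' (\<tau>, x \<tau>, caputo_vec \<alpha> a b x \<tau>, z \<tau>) (0, 0, 0, 1)))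
                      * L' (t, x t, caputo_vec \<alpha> a b x t, z t) (0, 0, axis j 1, 0)))"
    and eps: "\<epsilon> > 0"
    and h_C2: "\<And>j. C2_on ({a..b} \<times> UNIV \<times> {-\<epsilon><..<\<epsilon>}) (h j)"
    and h_0: "\<And>j t y. t \<in> {a..b} \<Longrightarrow> h j (t, y, 0) = y $ j"
    and xi_def: "\<And>j t y. t \<in> {a..b} \<Longrightarrow>
                   ((\<lambda>s. h j (t, y, s)) has_real_derivative \<xi> j t y) (at 0)"
    \<comment> \<open>Z s = z-bar[x + s xi; .] solves the same ODE with x replaced by x + s xi\<close>
    and Z_0: "\<And>t. t \<in> {a..b} \<Longrightarrow> Z 0 t = z t"
    and Z_init: "\<And>s. s \<in> {-\<epsilon><..<\<epsilon>} \<Longrightarrow> Z s a = za"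
    and Z_ode: "\<And>s t. s \<in> {-\<epsilon><..<\<epsilon>} \<Longrightarrow> t \<in> {a..b} \<Longrightarrow>
                 (Z s has_real_derivative
                    L (t, x t + s *\<^sub>R (\<chi> j. \<xi> j t (x t)),
                       caputo_vec \<alpha> a b (\<lambda>\<tau>. x \<tau> + s *\<^sub>R (\<chi> j. \<xi> j \<tau> (x \<tau>))) t,
                       Z s t)) (at t within {a..b})"
    and invariant: "\<And>t. t \<in> {a..b} \<Longrightarrow> ((\<lambda>s. Z s t) has_real_derivative 0) (at 0)"
    and EL: "\<And>j t. t \<in> {a..b} \<Longrightarrow>
               exp (- integral {a..t} (\<lambda>\<tau>. L' (\<tau>, x \<tau>, caputo_vec \<alpha> a b x \<tau>, z \<tau>) (0, 0, 0, 1)))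
                 * L' (t, x t, caputo_vec \<alpha> a b x t, z t) (0, axis j 1, 0, 0)
               + RL_right (\<alpha> j) a b
                 (\<lambda>t. exp (- integral {a..t} (\<lambda>\<tau>. L' (\<tau>, x \<tau>, caputo_vec \<alpha> a b x \<tau>, z \<tau>) (0, 0, 0, 1)))
                      * L' (t, x t, caputo_vec \<alpha> a b x t, z t) (0, 0, axis j 1, 0)) t = 0"
  shows "\<forall>t\<in>{a..b}. (\<Sum>j\<in>UNIV. frac_D (\<alpha> j) a b
            (\<lambda>t. exp (- integral {a..t} (\<lambda>\<tau>. L' (\<tau>, x \<tau>, caputo_vec \<alpha> a b x \<tau>, z \<tau>) (0, 0, 0, 1)))
                 * L' (t, x t, caputo_vec \<alpha> a b x t, z t) (0, 0, axis j 1, 0))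
            (\<lambda>t. \<xi> j t (x t)) t) = 0"
proof -
  have \<alpha>_lt_1: "\<And>j. \<alpha> j < 1"
    using alpha by simp
  define \<xi>v where "\<xi>v t = (\<chi> j. \<xi> j t (x t))" for t
  have \<xi>v_C1: "\<And>j. C1_on {a..b} (\<lambda>t. \<xi>v t $ j)"
    unfolding \<xi>v_def using C1_on_generator_along_curve[OF eps x_C1 h_C2 xi_def] by simp
  have \<xi>v_cont: "continuous_on {a..b} \<xi>v"
    using continuous_on_vec_lambda[of "{a..b}" "\<lambda>j t. \<xi>v t $ j"] C1_on_imp_continuous_on[OF \<xi>v_C1]
    by simp
  have x_C1': "\<And>j. C1_on {a..b} (\<lambda>t. x t $ j)"
    by (rule C1_on_vec_nth[OF x_C1])
  define p where "p t = (t, x t, caputo_vec \<alpha> a b x t, z t)" for t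
  define e where "e t = (0::real, \<xi>v t, caputo_vec \<alpha> a b \<xi>v t, 0::real)" for t
  have first_variation: "L' (p t) (e t) = 0" if "t \<in> {a..b}" for t
  proof (rule invariant_family_first_variation_zero[of a b \<epsilon> "{a..b} \<times> UNIV" L L' p e "(0, 0, 0, 1)" z Z])
    show "continuous_on {a..b} p"
      unfolding p_def using C1_on_imp_continuous_on[OF x_C1] C1_on_imp_continuous_on[OF Dx_C1]
        DERIV_continuous_on[OF z_ode] by (intro continuous_intros) auto
    show "continuous_on {a..b} e"
      unfolding e_def
      using \<xi>v_cont continuous_on_caputo_vec[OF ab \<alpha>_lt_1 \<xi>v_C1] by (intro continuous_intros)
    fix s t assume "s \<in> {-\<epsilon><..<\<epsilon>}" "t \<in> {a..b}"
    then show "(Z s has_real_derivative L (p t + s *\<^sub>R e t + (Z s t - z t) *\<^sub>R (0, 0, 0, 1)))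
        (at t within {a..b})"
      using Z_ode[of s t] caputo_vec_add_scaled[OF ab \<alpha>_lt_1 _ x_C1' \<xi>v_C1, where t = t and c = s]
      unfolding p_def e_def \<xi>v_def by simp
  qed (use that ab eps L_deriv L'_cont z_ode Z_0 invariant in \<open>auto simp: p_def e_def intro: convex_Times\<close>)
  have Noether_identity: "(\<Sum>j\<in>UNIV. frac_D (\<alpha> j) a b
            (\<lambda>t. exp (- integral {a..t} (\<lambda>\<tau>. L' (\<tau>, x \<tau>, caputo_vec \<alpha> a b x \<tau>, z \<tau>) (0, 0, 0, 1)))
                 * L' (t, x t, caputo_vec \<alpha> a b x t, z t) (0, 0, axis j 1, 0))
            (\<lambda>t. \<xi> j t (x t)) t)
        = exp (- integral {a..t} (\<lambda>\<tau>. L' (p \<tau>) (0, 0, 0, 1))) * L' (p t) (e t)"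
    (is "?sum = ?weight * _") if t: "t \<in> {a..b}" for t
  proof -
    have "?sum = ?weight * L' (p t) (0, \<chi> j. \<xi> j t (x t), \<chi> j. caputo_left (\<alpha> j) a b (\<lambda>t. \<xi> j t (x t)) t, 0)"
      unfolding p_def by (rule sum_frac_D_Euler_Lagrange) (use EL[OF t] in simp_all)
    also have "(0, \<chi> j. \<xi> j t (x t), \<chi> j. caputo_left (\<alpha> j) a b (\<lambda>t. \<xi> j t (x t)) t, 0) = e t"
      unfolding e_def \<xi>v_def caputo_vec_def by simp
    finally show ?thesis .
  qed
  show ?thesis
    using Noether_identity first_variation by simp
qed

end
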